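(* Let $\alpha\ge-1$. For $g\in\mathcal{H}(\mathbb{D})$ and $0<r<1$ let $g_r(z)=g(rz)$. Then (i) $N_{\alpha,q}(g)\le\liminf_{r\to1}N_{\alpha,q}(g_r)$ for all $g\in\mathcal{H}(\mathbb{D})$ and $q>0$; (ii) for each $q\ge1$ there is a constant $C>0$ independent of $g$ such that $\sup_{0<r<1}N_{\alpha,q}(g_r)\le C\,N_{\alpha,q}(g)$ for all $g\in\mathcal{H}(\mathbb{D})$.
   Context: $\mathbb{D}$ unit disc, $\mathcal{H}(\mathbb{D})$ analytic functions, $dA$ normalized area measure, $\phi_a(z)=\frac{a-z}{1-\bar az}$. For $\psi:\mathbb{D}\to\mathbb{R}$, $|\nabla\psi|(z)=\limsup_{w\to z}|\psi(w)-\psi(z)|/|w-z|$. For $\alpha\ge-1$, $q>0$: $N_{\alpha,q}(g)^{2q}=\sup_{a\in\mathbb{D}}\int_{\mathbb{D}}(1-|\phi_a|^2)^{\alpha+2}|\nabla|g|^q|^2\,dA\in[0,\infty]$. *)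

theory Defs
  imports "HOL-Analysis.Analysis"
begin

definition disc_auto :: "complex \<Rightarrow> complex \<Rightarrow> complex" where
  "disc_auto a z = (a - z) / (1 - cnj a * z)"

definition grad_norm :: "(complex \<Rightarrow> real) \<Rightarrow> complex \<Rightarrow> ennreal" where
  "grad_norm \<psi> z = Limsup (at z) (\<lambda>w. ennreal (\<bar>\<psi> w - \<psi> z\<bar> / cmod (w - z)))"

definition ennreal_powr :: "ennreal \<Rightarrow> real \<Rightarrow> ennreal" where
  "ennreal_powr x p = (if x = top then top else ennreal (enn2real x powr p))"

text \<open>N_{alpha,q}(g)^{2q} = sup_{a in D} int_D (1-|phi_a|^2)^{alpha+2} |nabla |g|^q|^2 dA,
  with dA = (1/pi) * Lebesgue area measure.\<close>
definition N_pow :: "real \<Rightarrow> real \<Rightarrow> (complex \<Rightarrow> complex) \<Rightarrow> ennreal" where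
  "N_pow \<alpha> q g = (SUP a\<in>ball 0 1.
      \<integral>\<^sup>+ z. ennreal (1 / pi) * indicator (ball 0 1) z
          * ennreal ((1 - (cmod (disc_auto a z))\<^sup>2) powr (\<alpha> + 2))
          * (grad_norm (\<lambda>w. cmod (g w) powr q) z)\<^sup>2 \<partial>lborel)"

definition N_norm :: "real \<Rightarrow> real \<Rightarrow> (complex \<Rightarrow> complex) \<Rightarrow> ennreal" where
  "N_norm \<alpha> q g = ennreal_powr (N_pow \<alpha> q g) (1 / (2 * q))"

end

theory Submission
  imports Defs "HOL-Complex_Analysis.Riemann_Mapping"
begin

(*
  Substituting w = r z in the integral defining N(g_r) at the point a, the factor r^2 produced by
  the chain rule for |nabla| cancels the Jacobian, so that integral becomes the integral of
  |nabla |g|^q|^2 (w) against the weight (1 - |phi_a(w/r)|^2)^(alpha+2) over the disc of radius r.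
  Schwarz-Pick for dilations, |phi_(ra)(rz)| <= |phi_a(z)|, bounds this weight by
  (1 - |phi_(ra)(w)|^2)^(alpha+2); hence N(g_r) <= N(g), which is (ii) with C = 1 (for all q > 0).
  As r -> 1 the weights converge pointwise, so (i) follows from Fatou's lemma.
*)

lemma norm_disc_auto_less_1:
  assumes "cmod a < 1" "cmod z < 1"
  shows "cmod (disc_auto a z) < 1"
proof -
  have "disc_auto a z = - Moebius_function 0 a z"
    by (simp add: disc_auto_def Moebius_function_simple minus_divide_left)
  then show ?thesis
    using Moebius_function_norm_lt_1[OF assms, of 0] by simp
qed

lemma norm_cnj_mult_less_1:
  assumes "cmod a < 1" "cmod z < 1"
  shows "cmod (cnj a * z) < 1"
proof -
  have "cmod a * cmod z \<le> cmod z"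
    using assms by (intro mult_left_le_one_le) auto
  then show ?thesis
    using assms by (simp add: norm_mult)
qed

lemma norm_disc_auto_dilate_le:
  assumes "cmod a < 1" "cmod z < 1" "0 < r" "r \<le> 1"
  shows "cmod (disc_auto (of_real r * a) (of_real r * z)) \<le> cmod (disc_auto a z)"
proof -
  define u where "u = cnj a * z"
  have u: "cmod u < 1"
    unfolding u_def using assms(1,2) by (rule norm_cnj_mult_less_1)
  have denom: "r * cmod (1 - u) \<le> cmod (1 - of_real (r\<^sup>2) * u)"
  proof -
    obtain x y where xy: "u = Complex x y" by (cases u)
    have "x\<^sup>2 + y\<^sup>2 < 1"
      using u by (simp add: xy cmod_def)
    \<comment> \<open>|1 - r^2 u|^2 - r^2 |1 - u|^2 = (1 - r^2) (1 - r^2 |u|^2)\<close>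
    then have "0 \<le> (1 - r\<^sup>2) * (1 - r\<^sup>2 * (x\<^sup>2 + y\<^sup>2))"
      using assms by (intro mult_nonneg_nonneg) (auto simp: power_le_one mult_le_one)
    then have "r\<^sup>2 * ((1 - x)\<^sup>2 + y\<^sup>2) \<le> (1 - r\<^sup>2 * x)\<^sup>2 + (r\<^sup>2 * y)\<^sup>2"
      by (simp add: algebra_simps power2_eq_square)
    then have "(r * cmod (1 - u))\<^sup>2 \<le> (cmod (1 - of_real (r\<^sup>2) * u))\<^sup>2"
      by (simp add: xy cmod_def power_mult_distrib)
    then show ?thesis
      using assms by (simp add: power2_le_iff_abs_le)
  qed
  have "u \<noteq> 1"
    using u by auto
  then have "0 < r * cmod (1 - u)"
    using assms by simp
  have "disc_auto (of_real r * a) (of_real r * z) = of_real r * (a - z) / (1 - of_real (r\<^sup>2) * u)"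
    by (simp add: disc_auto_def u_def algebra_simps power2_eq_square)
  then have "cmod (disc_auto (of_real r * a) (of_real r * z)) = r * cmod (a - z) / cmod (1 - of_real (r\<^sup>2) * u)"
    using assms by (simp add: norm_divide norm_mult)
  also have "\<dots> \<le> r * cmod (a - z) / (r * cmod (1 - u))"
    using denom assms \<open>0 < r * cmod (1 - u)\<close> by (intro divide_left_mono mult_pos_pos) auto
  also have "\<dots> = cmod (disc_auto a z)"
    using assms by (simp add: disc_auto_def u_def norm_divide)
  finally show ?thesis .
qed

definition disc_weight :: "real \<Rightarrow> complex \<Rightarrow> complex \<Rightarrow> real" where
  "disc_weight \<alpha> a z = (1 - (cmod (disc_auto a z))\<^sup>2) powr (\<alpha> + 2)"

lemma disc_weight_measurable [measurable]: "disc_weight \<alpha> a \<in> borel_measurable borel"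
  unfolding disc_weight_def[abs_def] disc_auto_def by measurable

lemma disc_weight_pos:
  assumes "cmod a < 1" "cmod z < 1"
  shows "0 < disc_weight \<alpha> a z"
proof -
  have "(cmod (disc_auto a z))\<^sup>2 < 1"
    using norm_disc_auto_less_1[OF assms] by (simp add: abs_square_less_1)
  then show ?thesis
    by (simp add: disc_weight_def)
qed

lemma disc_weight_dilate_le:
  assumes "\<alpha> \<ge> -2" "cmod a < 1" "cmod z < 1" "0 < r" "r \<le> 1"
  shows "disc_weight \<alpha> a z \<le> disc_weight \<alpha> (of_real r * a) (of_real r * z)"
  unfolding disc_weight_def
proof (rule powr_mono2)
  show "0 \<le> 1 - (cmod (disc_auto a z))\<^sup>2"
    using norm_disc_auto_less_1[OF assms(2,3)] by (simp add: abs_square_le_1)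
  show "1 - (cmod (disc_auto a z))\<^sup>2 \<le> 1 - (cmod (disc_auto (of_real r * a) (of_real r * z)))\<^sup>2"
    using norm_disc_auto_dilate_le[OF assms(2-5)] by (simp add: power_mono)
qed (use assms in simp)

lemma continuous_on_disc_weight:
  assumes "cmod a < 1"
  shows "continuous_on (ball 0 1) (disc_weight \<alpha> a)"
proof -
  have "1 - cnj a * z \<noteq> 0" if "z \<in> ball 0 1" for z
  proof
    assume "1 - cnj a * z = 0"
    then have "cmod (cnj a * z) = 1" by simp
    moreover have "cmod (cnj a * z) < 1"
      using assms that by (simp add: norm_cnj_mult_less_1)
    ultimately show False by simp
  qed
  moreover have "0 < 1 - (cmod (disc_auto a z))\<^sup>2" if "z \<in> ball 0 1" for z
    using norm_disc_auto_less_1[OF assms] that by (simp add: abs_square_less_1)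
  ultimately show ?thesis
    unfolding disc_weight_def[abs_def] disc_auto_def
    by (intro continuous_intros) force+
qed

lemma filtermap_of_real_mult_at:
  assumes "c \<noteq> 0"
  shows "filtermap (\<lambda>w::complex. of_real c * w) (at z) = at (of_real c * z)"
proof -
  have bij: "bij (\<lambda>w::complex. of_real c * w)"
    by (rule bij_betwI[where g = "\<lambda>w. of_real (1 / c) * w"]) (use assms in auto)
  have "filtermap (\<lambda>w::complex. of_real c * w) (at z within UNIV) =
      at (of_real c * z) within range (\<lambda>w::complex. of_real c * w)"
  proof (rule filtermap_linear_at_within[OF bij])
    show "isCont (\<lambda>w::complex. of_real c * w) z"
      by (intro continuous_intros)
    fix S :: "complex set"
    assume "open S"
    then have "open ((\<lambda>x. c *\<^sub>R x) ` S)"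
      using assms by (rule open_scaling[rotated])
    then show "open ((\<lambda>w::complex. of_real c * w) ` S)"
      by (simp add: scaleR_conv_of_real)
  qed
  then show ?thesis
    using bij by (simp add: bij_def)
qed

lemma grad_norm_dilate:
  assumes "0 < r"
  shows "grad_norm (\<lambda>w. \<psi> (of_real r * w)) z = ennreal r * grad_norm \<psi> (of_real r * z)"
proof -
  let ?c = "of_real r :: complex"
  define Q where "Q u = ennreal (\<bar>\<psi> u - \<psi> (?c * z)\<bar> / cmod (u - ?c * z))" for u
  have "cmod (?c * w - ?c * z) = r * cmod (w - z)" for w
    using assms by (simp add: right_diff_distrib[symmetric] norm_mult)
  then have quotient: "ennreal (\<bar>\<psi> (?c * w) - \<psi> (?c * z)\<bar> / cmod (w - z)) = ennreal r * Q (?c * w)" for w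
    using assms by (simp add: Q_def ennreal_mult'[symmetric])
  have "grad_norm (\<lambda>w. \<psi> (?c * w)) z = Limsup (at z) (\<lambda>w. ennreal r * Q (?c * w))"
    unfolding grad_norm_def quotient ..
  also have "\<dots> = ennreal r * Limsup (at z) (\<lambda>w. Q (?c * w))"
    by (rule Limsup_compose_continuous_mono)
       (auto intro!: ennreal_continuous_on_cmult continuous_on_id simp: mono_def mult_left_mono)
  also have "Limsup (at z) (\<lambda>w. Q (?c * w)) = Limsup (filtermap (\<lambda>w. ?c * w) (at z)) Q"
    by (rule Limsup_filtermap_eq[symmetric]) (use assms in \<open>auto simp: inj_def\<close>)
  also have "\<dots> = grad_norm \<psi> (?c * z)"
    using assms by (simp add: filtermap_of_real_mult_at grad_norm_def Q_def[abs_def])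
  finally show ?thesis .
qed

lemma grad_norm_eq_INF_nat:
  "grad_norm \<psi> z =
    (INF n. SUP w\<in>ball z (1 / Suc n) - {z}. ennreal (\<bar>\<psi> w - \<psi> z\<bar> / cmod (w - z)))"
  (is "_ = (INF n. ?A (1 / Suc n))")
proof -
  have A_mono: "?A e \<le> ?A e'" if "e \<le> e'" for e e'
    using that by (intro SUP_subset_mono) auto
  have "(INF e\<in>{0<..}. ?A e) = (INF n. ?A (1 / Suc n))"
  proof (rule antisym)
    show "(INF e\<in>{0<..}. ?A e) \<le> (INF n. ?A (1 / Suc n))"
      by (intro INF_greatest INF_lower) auto
    show "(INF n. ?A (1 / Suc n)) \<le> (INF e\<in>{0<..}. ?A e)"
    proof (rule INF_greatest)
      fix e :: real
      assume "e \<in> {0<..}"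
      then obtain n where "inverse (real (Suc n)) < e"
        using reals_Archimedean by auto
      then show "(INF n. ?A (1 / Suc n)) \<le> ?A e"
        by (intro INF_lower2[of n] A_mono) (auto simp: inverse_eq_divide)
    qed
  qed
  then show ?thesis
    unfolding grad_norm_def Limsup_at .
qed

lemma SUP_dense_eq_SUP_open:
  fixes f :: "'a::topological_space \<Rightarrow> 'b::{complete_linorder,linorder_topology}"
  assumes "open U" "continuous_on U f" and dense: "\<And>X. open X \<Longrightarrow> X \<noteq> {} \<Longrightarrow> \<exists>d\<in>D. d \<in> X"
  shows "(SUP x\<in>U \<inter> D. f x) = (SUP x\<in>U. f x)"
proof (rule antisym)
  show "(SUP x\<in>U \<inter> D. f x) \<le> (SUP x\<in>U. f x)"
    by (rule SUP_subset_mono) auto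
  show "(SUP x\<in>U. f x) \<le> (SUP x\<in>U \<inter> D. f x)"
  proof (rule SUP_least, rule ccontr)
    fix x
    assume "x \<in> U" and "\<not> f x \<le> (SUP x\<in>U \<inter> D. f x)"
    then have "x \<in> U \<inter> f -` {(SUP x\<in>U \<inter> D. f x)<..}"
      by auto
    moreover have "open (U \<inter> f -` {(SUP x\<in>U \<inter> D. f x)<..})"
      using assms(1,2) by (intro continuous_open_preimage) auto
    ultimately obtain d where "d \<in> U \<inter> D" "(SUP x\<in>U \<inter> D. f x) < f d"
      using dense[of "U \<inter> f -` {(SUP x\<in>U \<inter> D. f x)<..}"] by blast
    then show False
      by (metis SUP_upper leD)
  qed
qed

lemma INF_decseq_eventually_eq:
  fixes X Y :: "nat \<Rightarrow> 'a::{complete_linorder,linorder_topology}"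
  assumes "decseq X" "decseq Y" "eventually (\<lambda>n. X n = Y n) sequentially"
  shows "(INF n. X n) = (INF n. Y n)"
proof -
  have "X \<longlonglongrightarrow> (INF n. Y n)"
    using tendsto_cong[OF assms(3)] LIMSEQ_INF[OF assms(2)] by simp
  then show ?thesis
    using LIMSEQ_INF[OF assms(1)] by (rule LIMSEQ_unique[rotated])
qed

lemma SUP_dense_diff_quot_eq:
  fixes \<psi> \<psi>' :: "complex \<Rightarrow> real"
  assumes "0 < e" "continuous_on (ball z e) \<psi>" and \<psi>': "\<And>w. w \<in> ball z e \<Longrightarrow> \<psi>' w = \<psi> w"
    and dense: "\<And>X. open X \<Longrightarrow> X \<noteq> {} \<Longrightarrow> \<exists>d\<in>D. d \<in> X"
  shows "(SUP d\<in>D. if d \<noteq> z \<and> dist z d < e then ennreal (\<bar>\<psi>' d - \<psi>' z\<bar> / cmod (d - z)) else 0) =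
    (SUP w\<in>ball z e - {z}. ennreal (\<bar>\<psi> w - \<psi> z\<bar> / cmod (w - z)))"
proof -
  let ?U = "ball z e - {z}"
  define f where "f w = ennreal (\<bar>\<psi> w - \<psi> z\<bar> / cmod (w - z))" for w
  have "(if d \<noteq> z \<and> dist z d < e then ennreal (\<bar>\<psi>' d - \<psi>' z\<bar> / cmod (d - z)) else 0) =
      (if d \<in> ?U then f d else 0)" for d
    using assms(1) by (simp add: \<psi>' f_def)
  then have "(SUP d\<in>D. if d \<noteq> z \<and> dist z d < e then ennreal (\<bar>\<psi>' d - \<psi>' z\<bar> / cmod (d - z)) else 0) =
      (SUP d\<in>D. if d \<in> ?U then f d else 0)"
    by simp
  also have "\<dots> = (SUP d\<in>?U \<inter> D. f d)"
  proof (rule antisym)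
    show "(SUP d\<in>D. if d \<in> ?U then f d else 0) \<le> (SUP d\<in>?U \<inter> D. f d)"
    proof (rule SUP_least)
      fix d
      assume "d \<in> D"
      then show "(if d \<in> ?U then f d else 0) \<le> (SUP d\<in>?U \<inter> D. f d)"
        by (cases "d \<in> ?U") (simp_all add: SUP_upper)
    qed
    show "(SUP d\<in>?U \<inter> D. f d) \<le> (SUP d\<in>D. if d \<in> ?U then f d else 0)"
      by (rule SUP_mono) (metis IntD1 IntD2 order_refl)
  qed
  also have "\<dots> = (SUP w\<in>?U. f w)"
  proof (rule SUP_dense_eq_SUP_open)
    have "continuous_on ?U \<psi>"
      using assms(2) by (rule continuous_on_subset) auto
    then show "continuous_on ?U f"
      unfolding f_def by (intro continuous_on_ennreal continuous_intros) auto
  qed (use dense in auto)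
  finally show ?thesis
    by (simp add: f_def)
qed

lemma borel_grad_norm_on_open_exists:
  fixes \<psi> :: "complex \<Rightarrow> real"
  assumes S: "open S" and \<psi>: "continuous_on S \<psi>"
  obtains H where "H \<in> borel_measurable borel" "\<And>z. z \<in> S \<Longrightarrow> grad_norm \<psi> z = H z"
proof -
  obtain D :: "complex set" where D: "countable D" "\<And>X. open X \<Longrightarrow> X \<noteq> {} \<Longrightarrow> \<exists>d\<in>D. d \<in> X"
    using countable_dense_exists by blast
  define \<psi>' where "\<psi>' z = indicator S z *\<^sub>R \<psi> z" for z
  have [measurable]: "\<psi>' \<in> borel_measurable borel"
    unfolding \<psi>'_def[abs_def] using S \<psi> by (intro borel_measurable_continuous_on_indicator) auto
  define A where "A n z = (SUP w\<in>ball z (1 / Suc n) - {z}. ennreal (\<bar>\<psi> w - \<psi> z\<bar> / cmod (w - z)))"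
    for n z
  \<comment> \<open>Sup over the fixed countable set D, so that B n is Borel\<close>
  define B where "B n z = (SUP d\<in>D. if d \<noteq> z \<and> dist z d < 1 / Suc n
      then ennreal (\<bar>\<psi>' d - \<psi>' z\<bar> / cmod (d - z)) else 0)" for n z
  have "(\<lambda>z. INF n. B n z) \<in> borel_measurable borel"
    unfolding B_def using D(1) by measurable
  moreover have "grad_norm \<psi> z = (INF n. B n z)" if z: "z \<in> S" for z
  proof -
    obtain e where "0 < e" "ball z e \<subseteq> S"
      using S z open_contains_ball by blast
    moreover obtain N where "inverse (Suc N) < e"
      using reals_Archimedean \<open>0 < e\<close> by blast
    ultimately have N: "ball z (1 / Suc N) \<subseteq> S"
      by (metis inverse_eq_divide less_imp_le order_trans subset_ball)
    have "B n z = A n z" if "N \<le> n" for n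
    proof -
      have "1 / Suc n \<le> 1 / Suc N"
        using that by (simp add: frac_le)
      then have "ball z (1 / Suc n) \<subseteq> S"
        using N subset_ball by blast
      then show ?thesis
        unfolding A_def B_def using \<psi> D(2) \<psi>'_def
        by (intro SUP_dense_diff_quot_eq) (auto intro: continuous_on_subset)
    qed
    then have "(INF n. B n z) = (INF n. A n z)"
    proof (intro INF_decseq_eventually_eq decseq_SucI)
      fix n
      have radius: "1 / Suc (Suc n) \<le> 1 / Suc n"
        by (simp add: frac_le)
      show "B (Suc n) z \<le> B n z"
        unfolding B_def by (rule SUP_mono') (use radius in auto)
      show "A (Suc n) z \<le> A n z"
        unfolding A_def by (rule SUP_subset_mono) (use radius in auto)
    qed (auto simp: eventually_sequentially)
    then show ?thesis
      by (simp add: A_def grad_norm_eq_INF_nat)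
  qed
  ultimately show ?thesis
    using that by blast
qed

definition weighted_dirichlet_integral :: "real \<Rightarrow> (complex \<Rightarrow> real) \<Rightarrow> complex \<Rightarrow> ennreal" where
  "weighted_dirichlet_integral \<alpha> \<psi> a = (\<integral>\<^sup>+ z. ennreal (1 / pi) * indicator (ball 0 1) z
      * ennreal (disc_weight \<alpha> a z) * (grad_norm \<psi> z)\<^sup>2 \<partial>lborel)"

lemma N_pow_eq_SUP_weighted_dirichlet_integral:
  "N_pow \<alpha> q g = (SUP a\<in>ball 0 1. weighted_dirichlet_integral \<alpha> (\<lambda>w. cmod (g w) powr q) a)"
  by (simp add: N_pow_def weighted_dirichlet_integral_def disc_weight_def)

text \<open>The integrand of \<^const>\<open>weighted_dirichlet_integral\<close> for \<open>\<psi>(r \<cdot>)\<close> after the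
  substitution \<open>w = r z\<close>, with \<open>H\<close> a Borel version of \<open>|\<nabla>\<psi>|\<close>.\<close>
definition dilated_integrand :: "real \<Rightarrow> (complex \<Rightarrow> ennreal) \<Rightarrow> real \<Rightarrow> complex \<Rightarrow> complex \<Rightarrow> ennreal" where
  "dilated_integrand \<alpha> H r a w = ennreal (1 / pi) * indicator (ball 0 r) w
      * ennreal (disc_weight \<alpha> a (w / of_real r)) * (H w)\<^sup>2"

lemma dilated_integrand_measurable [measurable]:
  assumes [measurable]: "H \<in> borel_measurable borel"
  shows "dilated_integrand \<alpha> H r a \<in> borel_measurable borel"
proof -
  have "(\<lambda>w. w / of_real r :: complex) \<in> borel_measurable borel"
    by measurable
  from measurable_compose[OF this disc_weight_measurable]
  have [measurable]: "(\<lambda>w. disc_weight \<alpha> a (w / of_real r)) \<in> borel_measurable borel"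
    by simp
  have [measurable]: "ball (0::complex) r \<in> sets borel"
    by simp
  show ?thesis
    unfolding dilated_integrand_def[abs_def] by measurable
qed

lemma nn_integral_lborel_complex_dilate:
  fixes f :: "complex \<Rightarrow> ennreal"
  assumes [measurable]: "f \<in> borel_measurable borel" and "0 < r"
  shows "(\<integral>\<^sup>+x. f x \<partial>lborel) = (\<integral>\<^sup>+x. ennreal (r\<^sup>2) * f (of_real r * x) \<partial>lborel)"
proof -
  have "(\<integral>\<^sup>+x. f x \<partial>lborel) = (\<integral>\<^sup>+x. f x \<partial>density (distr lborel borel (\<lambda>x. 0 + r *\<^sub>R x))
      (\<lambda>_. ennreal (\<bar>r\<bar> ^ DIM(complex))))"
    using lborel_affine[of r "0::complex"] \<open>0 < r\<close> by simp
  also have "\<dots> = (\<integral>\<^sup>+x. ennreal (r\<^sup>2) * f (of_real r * x) \<partial>lborel)"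
    using \<open>0 < r\<close> by (simp add: nn_integral_density nn_integral_distr scaleR_conv_of_real)
  finally show ?thesis .
qed

lemma weighted_dirichlet_integral_dilate_eq:
  assumes [measurable]: "H \<in> borel_measurable borel"
    and H: "\<And>z. z \<in> ball 0 1 \<Longrightarrow> grad_norm \<psi> z = H z" and r: "0 < r" "r \<le> 1"
  shows "weighted_dirichlet_integral \<alpha> (\<lambda>z. \<psi> (of_real r * z)) a =
    (\<integral>\<^sup>+w. dilated_integrand \<alpha> H r a w \<partial>lborel)"
proof -
  have "(\<integral>\<^sup>+w. dilated_integrand \<alpha> H r a w \<partial>lborel) =
      (\<integral>\<^sup>+z. ennreal (r\<^sup>2) * dilated_integrand \<alpha> H r a (of_real r * z) \<partial>lborel)"
    using r by (intro nn_integral_lborel_complex_dilate) auto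
  also have "\<dots> = weighted_dirichlet_integral \<alpha> (\<lambda>z. \<psi> (of_real r * z)) a"
    unfolding weighted_dirichlet_integral_def
  proof (intro nn_integral_cong)
    fix z :: complex
    show "ennreal (r\<^sup>2) * dilated_integrand \<alpha> H r a (of_real r * z) =
        ennreal (1 / pi) * indicator (ball 0 1) z * ennreal (disc_weight \<alpha> a z) *
        (grad_norm (\<lambda>z. \<psi> (of_real r * z)) z)\<^sup>2"
    proof (cases "z \<in> ball 0 1")
      case True
      then have "cmod (of_real r * z) < r"
        using r by (simp add: norm_mult)
      then have "of_real r * z \<in> ball 0 r" "of_real r * z \<in> ball 0 1"
        using r by auto
      moreover have "grad_norm (\<lambda>z. \<psi> (of_real r * z)) z = ennreal r * H (of_real r * z)"
        using r \<open>of_real r * z \<in> ball 0 1\<close> by (simp add: grad_norm_dilate H)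
      ultimately show ?thesis
        using True r by (simp add: dilated_integrand_def power_mult_distrib ennreal_power[symmetric]
            ac_simps)
    qed (use r in \<open>simp add: dilated_integrand_def norm_mult\<close>)
  qed
  finally show ?thesis ..
qed

lemma dilated_integrand_le:
  assumes "\<alpha> \<ge> -2" "cmod a < 1" "0 < r" "r \<le> 1"
  shows "dilated_integrand \<alpha> H r a w \<le> dilated_integrand \<alpha> H 1 (of_real r * a) w"
proof (cases "w \<in> ball 0 r")
  case True
  define z where "z = w / of_real r"
  have "w = of_real r * z" "cmod z < 1"
    using True assms by (auto simp: z_def norm_divide divide_less_eq)
  then have "disc_weight \<alpha> a z \<le> disc_weight \<alpha> (of_real r * a) w"
    using disc_weight_dilate_le[OF assms(1,2) _ assms(3,4)] by simp
  moreover have "w \<in> ball 0 1"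
    using True assms by auto
  ultimately show ?thesis
    using True unfolding dilated_integrand_def z_def[symmetric]
    by (auto intro!: mult_right_mono mult_left_mono ennreal_leI)
qed (simp add: dilated_integrand_def)

lemma tendsto_dilated_integrand:
  assumes "cmod a < 1"
  shows "((\<lambda>r. dilated_integrand \<alpha> H r a w) \<longlongrightarrow> dilated_integrand \<alpha> H 1 a w) (at_left 1)"
proof (cases "cmod w < 1")
  case True
  have "((\<lambda>r. w / of_real r) \<longlongrightarrow> w / of_real 1) (at_left 1)"
    by (intro tendsto_intros) auto
  moreover have "isCont (disc_weight \<alpha> a) w"
    using continuous_on_disc_weight[OF assms] True
    by (simp add: continuous_on_eq_continuous_at)
  ultimately have "((\<lambda>r. disc_weight \<alpha> a (w / of_real r)) \<longlongrightarrow> disc_weight \<alpha> a w) (at_left 1)"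
    using isCont_tendsto_compose by fastforce
  then have "((\<lambda>r. ennreal (1 / pi) * ennreal (disc_weight \<alpha> a (w / of_real r)) * (H w)\<^sup>2)
      \<longlongrightarrow> ennreal (1 / pi) * ennreal (disc_weight \<alpha> a w) * (H w)\<^sup>2) (at_left 1)"
    using disc_weight_pos[OF assms True, of \<alpha>]
    by (intro tendsto_mult_ennreal tendsto_intros tendsto_ennrealI) (auto simp: ennreal_mult_eq_top_iff)
  moreover have "eventually (\<lambda>r. r \<in> {cmod w<..<1}) (at_left 1)"
    using True by (intro eventually_at_left_real)
  then have "eventually (\<lambda>r. ennreal (1 / pi) * ennreal (disc_weight \<alpha> a (w / of_real r)) * (H w)\<^sup>2
      = dilated_integrand \<alpha> H r a w) (at_left 1)"
    by eventually_elim (auto simp: dilated_integrand_def norm_divide)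
  ultimately show ?thesis
    using True by (simp add: tendsto_cong dilated_integrand_def)
next
  case False
  have "eventually (\<lambda>r. r \<in> {0<..<1}) (at_left (1::real))"
    by (intro eventually_at_left_real) simp
  then have "eventually (\<lambda>r. dilated_integrand \<alpha> H r a w = 0) (at_left 1)"
    by eventually_elim (use False in \<open>auto simp: dilated_integrand_def norm_divide le_divide_eq\<close>)
  then have "((\<lambda>r. dilated_integrand \<alpha> H r a w) \<longlongrightarrow> 0) (at_left 1)"
    by (rule tendsto_eventually)
  then show ?thesis
    using False by (simp add: dilated_integrand_def)
qed

lemma nn_integral_le_Liminf_at_left:
  fixes b :: real and f :: "real \<Rightarrow> 'a \<Rightarrow> ennreal"
  assumes meas: "\<And>r. f r \<in> borel_measurable M"
    and lim: "\<And>x. ((\<lambda>r. f r x) \<longlongrightarrow> g x) (at_left b)"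
  shows "(\<integral>\<^sup>+x. g x \<partial>M) \<le> Liminf (at_left b) (\<lambda>r. \<integral>\<^sup>+x. f r x \<partial>M)"
proof (rule le_Liminf_iff[THEN iffD2], intro allI impI)
  fix y
  assume y: "y < (\<integral>\<^sup>+x. g x \<partial>M)"
  show "eventually (\<lambda>r. y < (\<integral>\<^sup>+x. f r x \<partial>M)) (at_left b)"
  proof (rule sequentially_imp_eventually_at_left[of "b - 1"])
    fix s :: "nat \<Rightarrow> real"
    assume "\<And>n. s n < b" "s \<longlonglongrightarrow> b"
    then have "filterlim s (at_left b) sequentially"
      by (auto simp: filterlim_at less_imp_neq intro!: always_eventually)
    then have "(\<lambda>n. f (s n) x) \<longlonglongrightarrow> g x" for x
      by (rule filterlim_compose[OF lim])
    then have "liminf (\<lambda>n. f (s n) x) = g x" for x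
      by (intro lim_imp_Liminf) auto
    then have "(\<integral>\<^sup>+x. g x \<partial>M) = (\<integral>\<^sup>+x. liminf (\<lambda>n. f (s n) x) \<partial>M)"
      by simp
    also have "\<dots> \<le> liminf (\<lambda>n. \<integral>\<^sup>+x. f (s n) x \<partial>M)"
      using meas by (rule nn_integral_liminf)
    finally show "eventually (\<lambda>n. y < (\<integral>\<^sup>+x. f (s n) x \<partial>M)) sequentially"
      using y by (intro less_LiminfD) simp
  qed simp
qed

lemma weighted_dirichlet_integral_dilate_le:
  assumes "\<alpha> \<ge> -2" "continuous_on (ball 0 1) \<psi>" "cmod a < 1" "0 < r" "r \<le> 1"
  shows "weighted_dirichlet_integral \<alpha> (\<lambda>z. \<psi> (of_real r * z)) a \<le>
    weighted_dirichlet_integral \<alpha> \<psi> (of_real r * a)"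
proof -
  obtain H where H: "H \<in> borel_measurable borel" "\<And>z. z \<in> ball 0 1 \<Longrightarrow> grad_norm \<psi> z = H z"
    using borel_grad_norm_on_open_exists[OF _ assms(2)] by blast
  have "weighted_dirichlet_integral \<alpha> (\<lambda>z. \<psi> (of_real r * z)) a =
      (\<integral>\<^sup>+w. dilated_integrand \<alpha> H r a w \<partial>lborel)"
    using H assms(4,5) by (rule weighted_dirichlet_integral_dilate_eq)
  also have "\<dots> \<le> (\<integral>\<^sup>+w. dilated_integrand \<alpha> H 1 (of_real r * a) w \<partial>lborel)"
    using assms by (intro nn_integral_mono dilated_integrand_le) auto
  also have "\<dots> = weighted_dirichlet_integral \<alpha> \<psi> (of_real r * a)"
    using weighted_dirichlet_integral_dilate_eq[OF H, of 1] by simp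
  finally show ?thesis .
qed

lemma weighted_dirichlet_integral_le_Liminf_dilate:
  assumes "continuous_on (ball 0 1) \<psi>" "cmod a < 1"
  shows "weighted_dirichlet_integral \<alpha> \<psi> a \<le>
    Liminf (at_left 1) (\<lambda>r. weighted_dirichlet_integral \<alpha> (\<lambda>z. \<psi> (of_real r * z)) a)"
proof -
  obtain H where H: "H \<in> borel_measurable borel" "\<And>z. z \<in> ball 0 1 \<Longrightarrow> grad_norm \<psi> z = H z"
    using borel_grad_norm_on_open_exists[OF _ assms(1)] by blast
  have "weighted_dirichlet_integral \<alpha> \<psi> a = (\<integral>\<^sup>+w. dilated_integrand \<alpha> H 1 a w \<partial>lborel)"
    using weighted_dirichlet_integral_dilate_eq[OF H, of 1] by simp
  also have "\<dots> \<le> Liminf (at_left 1) (\<lambda>r. \<integral>\<^sup>+w. dilated_integrand \<alpha> H r a w \<partial>lborel)"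
    using H(1) assms(2) by (intro nn_integral_le_Liminf_at_left tendsto_dilated_integrand) auto
  also have "\<dots> = Liminf (at_left 1) (\<lambda>r. weighted_dirichlet_integral \<alpha> (\<lambda>z. \<psi> (of_real r * z)) a)"
  proof (rule Liminf_eq)
    have "eventually (\<lambda>r. r \<in> {0<..<1}) (at_left (1::real))"
      by (intro eventually_at_left_real) simp
    then show "eventually (\<lambda>r. (\<integral>\<^sup>+w. dilated_integrand \<alpha> H r a w \<partial>lborel) =
        weighted_dirichlet_integral \<alpha> (\<lambda>z. \<psi> (of_real r * z)) a) (at_left 1)"
      by eventually_elim (rule weighted_dirichlet_integral_dilate_eq[OF H, symmetric]; simp)
  qed
  finally show ?thesis .
qed

lemma continuous_on_norm_powr:
  assumes "continuous_on S g" "0 < q"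
  shows "continuous_on S (\<lambda>w. cmod (g w) powr q)"
  using assms by (intro continuous_on_powr' continuous_intros) auto

lemma N_pow_dilate_le:
  assumes "\<alpha> \<ge> -2" "continuous_on (ball 0 1) g" "0 < q" "0 < r" "r \<le> 1"
  shows "N_pow \<alpha> q (\<lambda>z. g (of_real r * z)) \<le> N_pow \<alpha> q g"
  unfolding N_pow_eq_SUP_weighted_dirichlet_integral
proof (rule SUP_least)
  fix a :: complex
  assume a: "a \<in> ball 0 1"
  then have "of_real r * a \<in> ball 0 1"
    using assms by (simp add: norm_mult mult_le_less_imp_less[of r 1 "cmod a" 1, simplified])
  have "weighted_dirichlet_integral \<alpha> (\<lambda>w. cmod (g (of_real r * w)) powr q) a \<le>
      weighted_dirichlet_integral \<alpha> (\<lambda>w. cmod (g w) powr q) (of_real r * a)"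
    using a assms by (intro weighted_dirichlet_integral_dilate_le continuous_on_norm_powr) auto
  also have "\<dots> \<le> (SUP a\<in>ball 0 1. weighted_dirichlet_integral \<alpha> (\<lambda>w. cmod (g w) powr q) a)"
    using \<open>of_real r * a \<in> ball 0 1\<close> by (rule SUP_upper)
  finally show "weighted_dirichlet_integral \<alpha> (\<lambda>w. cmod (g (of_real r * w)) powr q) a \<le> \<dots>" .
qed

lemma N_pow_le_Liminf_dilate:
  assumes "continuous_on (ball 0 1) g" "0 < q"
  shows "N_pow \<alpha> q g \<le> Liminf (at_left 1) (\<lambda>r. N_pow \<alpha> q (\<lambda>z. g (of_real r * z)))"
  unfolding N_pow_eq_SUP_weighted_dirichlet_integral
proof (rule SUP_least)
  fix a :: complex
  assume a: "a \<in> ball 0 1"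
  have "weighted_dirichlet_integral \<alpha> (\<lambda>w. cmod (g w) powr q) a \<le>
      Liminf (at_left 1) (\<lambda>r. weighted_dirichlet_integral \<alpha> (\<lambda>w. cmod (g (of_real r * w)) powr q) a)"
    using a by (intro weighted_dirichlet_integral_le_Liminf_dilate continuous_on_norm_powr assms) auto
  also have "\<dots> \<le> Liminf (at_left 1) (\<lambda>r. SUP a\<in>ball 0 1.
      weighted_dirichlet_integral \<alpha> (\<lambda>w. cmod (g (of_real r * w)) powr q) a)"
    using a by (intro Liminf_mono always_eventually allI SUP_upper)
  finally show "weighted_dirichlet_integral \<alpha> (\<lambda>w. cmod (g w) powr q) a \<le> \<dots>" .
qed

lemma ennreal_powr_mono:
  assumes "0 \<le> p" "x \<le> y"
  shows "ennreal_powr x p \<le> ennreal_powr y p"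
proof (cases "y = top")
  case False
  then have "x \<noteq> top" "enn2real x \<le> enn2real y"
    using assms by (auto simp: top_unique enn2real_mono top.not_eq_extremum)
  with False assms show ?thesis
    by (simp add: ennreal_powr_def powr_mono2)
qed (simp add: ennreal_powr_def)

lemma less_ennreal_powr_approx:
  assumes "0 < p" "y < ennreal_powr x p"
  obtains x' where "x' < x" "y < ennreal_powr x' p"
proof -
  obtain y0 where y: "y = ennreal y0" "0 \<le> y0"
    using assms(2) by (cases y) auto
  show ?thesis
  proof (cases "x = top")
    case True
    have "ennreal_powr (ennreal ((y0 + 1) powr (1 / p))) p = ennreal (y0 + 1)"
      using assms(1) y(2) by (simp add: ennreal_powr_def powr_powr)
    then show ?thesis
      using True y by (intro that[of "ennreal ((y0 + 1) powr (1 / p))"]) auto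
  next
    case False
    then obtain x0 where x: "x = ennreal x0" "0 \<le> x0"
      by (cases x) auto
    then have "y0 < x0 powr p"
      using assms(2) y by (simp add: ennreal_powr_def ennreal_less_iff)
    define m where "m = (y0 + x0 powr p) / 2"
    have m: "y0 < m" "m < x0 powr p"
      using \<open>y0 < x0 powr p\<close> by (auto simp: m_def)
    have "m powr (1 / p) < (x0 powr p) powr (1 / p)"
      using m y(2) assms(1) by (intro powr_less_mono2) auto
    also have "\<dots> = x0"
      using assms(1) x(2) by (simp add: powr_powr)
    finally have "ennreal (m powr (1 / p)) < x"
      using x by (simp add: ennreal_less_iff)
    moreover have "ennreal_powr (ennreal (m powr (1 / p))) p = ennreal m"
      using assms(1) m y(2) by (simp add: ennreal_powr_def powr_powr)
    ultimately show ?thesis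
      using m y by (intro that) (auto simp: ennreal_less_iff)
  qed
qed

lemma ennreal_powr_le_Liminf:
  assumes "0 < p" "x \<le> Liminf F f"
  shows "ennreal_powr x p \<le> Liminf F (\<lambda>r. ennreal_powr (f r) p)"
proof (rule le_Liminf_iff[THEN iffD2], intro allI impI)
  fix y
  assume "y < ennreal_powr x p"
  then obtain x' where "x' < x" "y < ennreal_powr x' p"
    using less_ennreal_powr_approx assms(1) by blast
  then have "eventually (\<lambda>r. x' < f r) F"
    using assms(2) by (intro less_LiminfD) simp
  then show "eventually (\<lambda>r. y < ennreal_powr (f r) p) F"
  proof eventually_elim
    case (elim r)
    then have "ennreal_powr x' p \<le> ennreal_powr (f r) p"
      using assms(1) by (intro ennreal_powr_mono) auto
    with \<open>y < ennreal_powr x' p\<close> show ?case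
      by simp
  qed
qed

theorem proposition2p9:
  fixes \<alpha> :: real
  assumes "\<alpha> \<ge> -1"
  shows "(\<forall>g q. g holomorphic_on ball 0 1 \<and> q > 0 \<longrightarrow>
            N_norm \<alpha> q g \<le> Liminf (at_left 1) (\<lambda>r. N_norm \<alpha> q (\<lambda>z. g (complex_of_real r * z))))
       \<and> (\<forall>q::real. q \<ge> 1 \<longrightarrow> (\<exists>C::real. C > 0 \<and>
            (\<forall>g. g holomorphic_on ball 0 1 \<longrightarrow>
               (SUP r\<in>{0<..<1}. N_norm \<alpha> q (\<lambda>z. g (complex_of_real r * z))) \<le> ennreal C * N_norm \<alpha> q g)))"
proof (intro conjI allI impI)
  fix g :: "complex \<Rightarrow> complex" and q :: real
  assume "g holomorphic_on ball 0 1 \<and> q > 0"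
  then have "continuous_on (ball 0 1) g" "0 < q"
    by (auto intro: holomorphic_on_imp_continuous_on)
  then have "N_pow \<alpha> q g \<le> Liminf (at_left 1) (\<lambda>r. N_pow \<alpha> q (\<lambda>z. g (of_real r * z)))"
    by (rule N_pow_le_Liminf_dilate)
  then show "N_norm \<alpha> q g \<le> Liminf (at_left 1) (\<lambda>r. N_norm \<alpha> q (\<lambda>z. g (of_real r * z)))"
    unfolding N_norm_def using \<open>0 < q\<close> by (intro ennreal_powr_le_Liminf) auto
next
  fix q :: real
  assume "q \<ge> 1"
  show "\<exists>C. C > 0 \<and> (\<forall>g. g holomorphic_on ball 0 1 \<longrightarrow>
      (SUP r\<in>{0<..<1}. N_norm \<alpha> q (\<lambda>z. g (of_real r * z))) \<le> ennreal C * N_norm \<alpha> q g)"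
  proof (intro exI[of _ 1] conjI allI impI)
    fix g :: "complex \<Rightarrow> complex"
    assume "g holomorphic_on ball 0 1"
    then have "continuous_on (ball 0 1) g"
      by (rule holomorphic_on_imp_continuous_on)
    then have "N_norm \<alpha> q (\<lambda>z. g (of_real r * z)) \<le> N_norm \<alpha> q g" if "r \<in> {0<..<1}" for r
      unfolding N_norm_def using assms \<open>q \<ge> 1\<close> that
      by (intro ennreal_powr_mono N_pow_dilate_le) auto
    then show "(SUP r\<in>{0<..<1}. N_norm \<alpha> q (\<lambda>z. g (of_real r * z))) \<le> ennreal 1 * N_norm \<alpha> q g"
      by (auto intro!: SUP_least)
  qed simp
qed

end
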